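(* Let $v\in\mathbb{R}^2$ and let $f\in\mathrm{CPA}_3$ be a $v$-function with three pieces. Then there are signs $\sigma_1,\sigma_2\in\{-1,1\}$ and functions $g_1,g_2,g_3$, each of which is an affine component of $f$ multiplied by $-1$ or $1$, such that $$f=\sigma_1\max\big(g_1,\sigma_2\max(g_2,g_3)\big).$$
   Context: For $v,u\in\mathbb{R}^2$, $u\ne0$: a line segment $\{v+tu:t\in[0,1]\}$, a ray $\{v+tu:t\ge0\}$ (vertex $v$), a line $\{v+tu:t\in\mathbb{R}\}$. A polygon is a closed $P\subseteq\mathbb{R}^2$ with connected interior whose boundary is the union of finitely many polygonal arcs and cycles (piecewise-linear curves built from segments, rays and lines, homeomorphic to a line or circle), any two meeting in the empty set or a common vertex. A continuous $f:\mathbb{R}^2\to\mathbb{R}$ is continuous piecewise affine (CPA) with admissible pieces $\mathcal{P}$ if $\mathcal{P}$ is a finite set of polygons covering $\mathbb{R}^2$, $P\cap Q=\partial P\cap\partial Q$ for distinct pieces, every vertex of a piece is a vertex of every piece containing it, and $f|_P=f_P$ is affine for each $P$; $f_P$ is the affine component of $P$. $\mathrm{CPA}_3$ is the set of CPA functions admitting an admissible set of $3$ pieces. A CPA function is a $v$-function if $v$ is its only vertex and all its edges are rays. *)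

theory Defs
  imports "HOL-Analysis.Analysis"
begin

type_synonym pt = "real \<times> real"

definition seg2 :: "pt \<Rightarrow> pt \<Rightarrow> pt set" where
  "seg2 v u = {v + t *\<^sub>R u | t. 0 \<le> t \<and> t \<le> 1}"

definition ray2 :: "pt \<Rightarrow> pt \<Rightarrow> pt set" where
  "ray2 v u = {v + t *\<^sub>R u | t. 0 \<le> t}"

definition line2 :: "pt \<Rightarrow> pt \<Rightarrow> pt set" where
  "line2 v u = {v + t *\<^sub>R u | t. True}"

definition is_ray :: "pt set \<Rightarrow> bool" where
  "is_ray E \<longleftrightarrow> (\<exists>v u. u \<noteq> 0 \<and> E = ray2 v u)"

definition linear_piece :: "pt set \<Rightarrow> bool" where
  "linear_piece S \<longleftrightarrow> (\<exists>v u. u \<noteq> 0 \<and> (S = seg2 v u \<or> S = ray2 v u \<or> S = line2 v u))"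

definition polygonal_curve :: "pt set \<Rightarrow> bool" where
  "polygonal_curve C \<longleftrightarrow>
     (\<exists>L. finite L \<and> L \<noteq> {} \<and> (\<forall>S\<in>L. linear_piece S) \<and> C = \<Union>L) \<and>
     (C homeomorphic (UNIV :: real set) \<or> C homeomorphic sphere (0::pt) 1)"

definition vertex_of :: "pt set \<Rightarrow> pt \<Rightarrow> bool" where
  "vertex_of S x \<longleftrightarrow> x \<in> S \<and>
     \<not> (\<exists>e>0. \<exists>a u. u \<noteq> 0 \<and> S \<inter> ball x e = line2 a u \<inter> ball x e)"

definition polygon :: "pt set \<Rightarrow> bool" where
  "polygon P \<longleftrightarrow> closed P \<and> connected (interior P) \<and>
     (\<exists>\<C>. finite \<C> \<and> (\<forall>C\<in>\<C>. polygonal_curve C) \<and> frontier P = \<Union>\<C> \<and>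
        (\<forall>C\<in>\<C>. \<forall>D\<in>\<C>. C \<noteq> D \<longrightarrow>
           C \<inter> D = {} \<or> (\<exists>x. C \<inter> D = {x} \<and> vertex_of C x \<and> vertex_of D x)))"

definition vertices :: "pt set \<Rightarrow> pt set" where
  "vertices P = {x. vertex_of (frontier P) x}"

definition edges :: "pt set \<Rightarrow> pt set set" where
  "edges P = closure ` components (frontier P - vertices P)"

definition affine_fun :: "(pt \<Rightarrow> real) \<Rightarrow> bool" where
  "affine_fun h \<longleftrightarrow> (\<exists>a b c. \<forall>x. h x = a * fst x + b * snd x + c)"

definition admissible :: "(pt \<Rightarrow> real) \<Rightarrow> pt set set \<Rightarrow> bool" where
  "admissible f \<P> \<longleftrightarrow> continuous_on UNIV f \<and> finite \<P> \<and> (\<forall>P\<in>\<P>. polygon P) \<and> \<Union>\<P> = UNIV \<and>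
     (\<forall>P\<in>\<P>. \<forall>Q\<in>\<P>. P \<noteq> Q \<longrightarrow> P \<inter> Q = frontier P \<inter> frontier Q) \<and>
     (\<forall>P\<in>\<P>. \<forall>Q\<in>\<P>. \<forall>x\<in>vertices P. x \<in> Q \<longrightarrow> x \<in> vertices Q) \<and>
     (\<forall>P\<in>\<P>. \<exists>h. affine_fun h \<and> (\<forall>x\<in>P. f x = h x))"

definition affine_component :: "(pt \<Rightarrow> real) \<Rightarrow> pt set \<Rightarrow> (pt \<Rightarrow> real) \<Rightarrow> bool" where
  "affine_component f P h \<longleftrightarrow> affine_fun h \<and> (\<forall>x\<in>P. f x = h x)"

definition CPA3 :: "(pt \<Rightarrow> real) set" where
  "CPA3 = {f. \<exists>\<P>. admissible f \<P> \<and> card \<P> = 3}"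

definition v_function :: "pt \<Rightarrow> (pt \<Rightarrow> real) \<Rightarrow> pt set set \<Rightarrow> bool" where
  "v_function v f \<P> \<longleftrightarrow> admissible f \<P> \<and> (\<Union>P\<in>\<P>. vertices P) = {v} \<and>
     (\<forall>P\<in>\<P>. \<forall>E\<in>edges P. is_ray E)"

end

theory Submission
  imports Defs
begin

(*
  Subtracting the affine component k2 of one piece, f - k2 becomes a continuous selection of
  u = k1 - k2, 0 and w = k3 - k2, which all vanish at v: every nonempty piece contains v, because
  the endpoint of a ray edge must be a vertex, and v is the only one.

  If u and w are linearly dependent, f - k2 is a fixed multiple of one linear form on each side
  of its zero line, hence the max or the min of two such multiples.  Otherwise (u, w) is an
  affine change of coordinates, and in the new coordinates (x, y) we have a continuous selection
  of x, 0, y.  It uses one fixed candidate on each of the six sectors cut out by x = 0, y = 0 and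
  x = y, and continuity across the six walls leaves 18 labellings of the sectors.  Seventeen of
  them are terms max/min(g1, max/min(g2, g3)); the last is the median of x, 0, y.  The median
  vanishes exactly where x y <= 0, so the piece of k2 would contain the two open quadrants
  x y < 0 and lie in their closure, and its interior would not be connected.
*)

section \<open>Continuous selections on connected sets\<close>

lemma connected_continuous_selection:
  fixes H :: "'a::topological_space \<Rightarrow> real" and f :: "'i \<Rightarrow> 'a \<Rightarrow> real"
  assumes "connected S" "S \<noteq> {}" "finite I"
    and "continuous_on S H" "\<And>i. i \<in> I \<Longrightarrow> continuous_on S (f i)"
    and sel: "\<And>x. x \<in> S \<Longrightarrow> \<exists>i\<in>I. H x = f i x"
    and inj: "\<And>x. x \<in> S \<Longrightarrow> inj_on (\<lambda>i. f i x) I"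
  shows "\<exists>i\<in>I. \<forall>x\<in>S. H x = f i x"
proof -
  define E where "E i = {x \<in> S. H x - f i x = 0}" for i
  have closed: "closedin (top_of_set S) (E i)" if "i \<in> I" for i
    unfolding E_def using assms(4) assms(5)[OF that]
    by (intro continuous_closedin_preimage_constant continuous_intros)
  obtain x0 i0 where "x0 \<in> S" "i0 \<in> I" "H x0 = f i0 x0"
    using assms(2) sel by blast
  then have "E i0 \<noteq> {}" by (auto simp: E_def)
  have "S - E i0 = (\<Union>i\<in>I - {i0}. E i)"
  proof (intro equalityI subsetI)
    fix x assume "x \<in> S - E i0"
    then obtain i where "i \<in> I" "H x = f i x" "i \<noteq> i0" using sel by (auto simp: E_def)
    then show "x \<in> (\<Union>i\<in>I - {i0}. E i)" using \<open>x \<in> S - E i0\<close> by (auto simp: E_def)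
  next
    fix x assume "x \<in> (\<Union>i\<in>I - {i0}. E i)"
    then obtain i where "i \<in> I" "i \<noteq> i0" "x \<in> S" "H x = f i x" by (auto simp: E_def)
    then have "H x \<noteq> f i0 x" using inj[of x] \<open>i0 \<in> I\<close> by (auto dest: inj_onD)
    then show "x \<in> S - E i0" using \<open>x \<in> S\<close> by (simp add: E_def)
  qed
  moreover have "closedin (top_of_set S) (\<Union>i\<in>I - {i0}. E i)"
    using closed \<open>finite I\<close> by (intro closedin_Union) auto
  ultimately have "openin (top_of_set S) (S - (S - E i0))"
    by (intro openin_diff) auto
  moreover have "S - (S - E i0) = E i0" by (auto simp: E_def)
  ultimately have "openin (top_of_set S) (E i0)" by simp
  then have "E i0 = S"
    using \<open>connected S\<close> \<open>E i0 \<noteq> {}\<close> closed[OF \<open>i0 \<in> I\<close>] unfolding connected_clopen by blast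
  then show ?thesis using \<open>i0 \<in> I\<close> by (auto simp: E_def)
qed

lemma in_closure_if_ray_in:
  fixes p r :: "'a::real_normed_vector"
  assumes "\<And>e. e > 0 \<Longrightarrow> p + e *\<^sub>R r \<in> U"
  shows "p \<in> closure U"
proof (rule Lim_in_closed_set)
  have "((\<lambda>e. p + e *\<^sub>R r) \<longlongrightarrow> p + 0 *\<^sub>R r) (at_right 0)"
    by (intro tendsto_intros)
  then show "((\<lambda>e. p + e *\<^sub>R r) \<longlongrightarrow> p) (at_right 0)" by simp
  show "\<forall>\<^sub>F e in at_right 0. p + e *\<^sub>R r \<in> closure U"
    using eventually_at_right_less by (rule eventually_mono) (use assms closure_subset in blast)
qed auto

lemma connected_selection_of_multiples:
  fixes G z :: "'a::topological_space \<Rightarrow> real" and M :: "real set"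
  assumes "connected S" "finite M" "continuous_on S G" "continuous_on S z"
    and "\<And>x. x \<in> S \<Longrightarrow> z x \<noteq> 0" "\<And>x. x \<in> S \<Longrightarrow> \<exists>\<mu>\<in>M. G x = \<mu> * z x" "M \<noteq> {}"
  shows "\<exists>\<mu>\<in>M. \<forall>x\<in>S. G x = \<mu> * z x"
proof (cases "S = {}")
  case False
  show ?thesis
  proof (rule connected_continuous_selection[where f = "\<lambda>\<mu> x. \<mu> * z x"])
    show "inj_on (\<lambda>\<mu>. \<mu> * z x) M" if "x \<in> S" for x
      using assms(5)[OF that] by (auto simp: inj_on_def)
  qed (use assms False in \<open>auto intro: continuous_intros\<close>)
qed (use assms in auto)

section \<open>Nested max-min terms\<close>

(* maxmin s1 s2 x y z is the theorem's shape s1 max(g1, s2 max(g2, g3)) with g1 = s1 x and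
   g2 = s1 s2 y, g3 = s1 s2 z; see maxmin_signs for the four lattice terms it covers. *)
definition maxmin :: "real \<Rightarrow> real \<Rightarrow> real \<Rightarrow> real \<Rightarrow> real \<Rightarrow> real" where
  "maxmin s1 s2 x y z = s1 * max (s1 * x) (s2 * max (s1 * s2 * y) (s1 * s2 * z))"

lemma maxmin_signs:
  "maxmin 1 1 x y z = max x (max y z)"
  "maxmin 1 (-1) x y z = max x (min y z)"
  "maxmin (-1) 1 x y z = min x (min y z)"
  "maxmin (-1) (-1) x y z = min x (max y z)"
  by (simp_all add: maxmin_def minus_max_eq_min minus_min_eq_max)

lemma maxmin_add:
  assumes "s1 \<in> {-1, 1}" "s2 \<in> {-1, 1}"
  shows "maxmin s1 s2 (x + c) (y + c) (z + c) = maxmin s1 s2 x y z + c"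
  using assms by (auto simp: maxmin_signs max_def min_def)

definition maxmin_of :: "('a \<Rightarrow> real) set \<Rightarrow> ('a \<Rightarrow> real) \<Rightarrow> bool" where
  "maxmin_of \<Phi> f \<longleftrightarrow>
    (\<exists>s1\<in>{-1, 1}. \<exists>s2\<in>{-1, 1}. \<exists>g1\<in>\<Phi>. \<exists>g2\<in>\<Phi>. \<exists>g3\<in>\<Phi>. \<forall>x. f x = maxmin s1 s2 (g1 x) (g2 x) (g3 x))"

lemma maxmin_ofI:
  assumes "s1 \<in> {-1, 1}" "s2 \<in> {-1, 1}" "g1 \<in> \<Phi>" "g2 \<in> \<Phi>" "g3 \<in> \<Phi>"
    and "\<And>x. f x = maxmin s1 s2 (g1 x) (g2 x) (g3 x)"
  shows "maxmin_of \<Phi> f"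
  unfolding maxmin_of_def using assms by blast

lemma maxmin_ofE:
  assumes "maxmin_of \<Phi> f"
  obtains s1 s2 g1 g2 g3 where "s1 \<in> {-1, 1}" "s2 \<in> {-1, 1}" "g1 \<in> \<Phi>" "g2 \<in> \<Phi>" "g3 \<in> \<Phi>"
    and "\<forall>x. f x = maxmin s1 s2 (g1 x) (g2 x) (g3 x)"
  using assms unfolding maxmin_of_def by blast

lemma maxmin_of_compose:
  assumes "maxmin_of \<Phi> f"
  shows "maxmin_of ((\<lambda>g. g \<circ> L) ` \<Phi>) (f \<circ> L)"
proof -
  obtain s1 s2 g1 g2 g3 where "s1 \<in> {-1, 1}" "s2 \<in> {-1, 1}" "g1 \<in> \<Phi>" "g2 \<in> \<Phi>" "g3 \<in> \<Phi>"
    and "\<forall>x. f x = maxmin s1 s2 (g1 x) (g2 x) (g3 x)"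
    using assms by (rule maxmin_ofE)
  then show ?thesis by (intro maxmin_ofI[of s1 s2 "g1 \<circ> L" _ "g2 \<circ> L" "g3 \<circ> L"]) auto
qed

lemma maxmin_of_add:
  assumes "maxmin_of \<Phi> f"
  shows "maxmin_of ((\<lambda>g x. g x + k x) ` \<Phi>) (\<lambda>x. f x + k x)"
proof -
  obtain s1 s2 g1 g2 g3 where "s1 \<in> {-1, 1}" "s2 \<in> {-1, 1}" "g1 \<in> \<Phi>" "g2 \<in> \<Phi>" "g3 \<in> \<Phi>"
    and "\<forall>x. f x = maxmin s1 s2 (g1 x) (g2 x) (g3 x)"
    using assms by (rule maxmin_ofE)
  then show ?thesis
    by (intro maxmin_ofI[of s1 s2 "\<lambda>x. g1 x + k x" _ "\<lambda>x. g2 x + k x" "\<lambda>x. g3 x + k x"])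
      (auto simp: maxmin_add)
qed

lemma maxmin_of_mono:
  assumes "maxmin_of \<Phi> f" "\<Phi> \<subseteq> \<Psi>"
  shows "maxmin_of \<Psi> f"
proof -
  obtain s1 s2 g1 g2 g3 where "s1 \<in> {-1, 1}" "s2 \<in> {-1, 1}" "g1 \<in> \<Phi>" "g2 \<in> \<Phi>" "g3 \<in> \<Phi>"
    and "\<forall>x. f x = maxmin s1 s2 (g1 x) (g2 x) (g3 x)"
    using assms(1) by (rule maxmin_ofE)
  then show ?thesis using assms(2) by (intro maxmin_ofI[of s1 s2 g1 \<Psi> g2 g3]) auto
qed

section \<open>Continuous selections of x, 0, y in the plane\<close>

definition coord :: "nat \<Rightarrow> pt \<Rightarrow> real" where
  "coord i p = (if i = 0 then fst p else if i = 1 then 0 else snd p)"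

lemma coord_add_scaleR: "coord i (p + e *\<^sub>R r) = coord i p + e * coord i r"
  by (simp add: coord_def)

(* Stated with Suc 0, which is the simp normal form of 1 :: nat. *)
lemma coord_simps: "coord 0 p = fst p" "coord (Suc 0) p = 0" "coord 2 p = snd p"
  by (simp_all add: coord_def)

lemma continuous_on_coord: "continuous_on S (coord i)"
proof -
  have "coord i = (if i = 0 then fst else if i = 1 then (\<lambda>_. 0) else snd)"
    by (auto simp: fun_eq_iff coord_def)
  then show ?thesis by (auto intro!: continuous_intros)
qed

lemma convex_coord_less: "convex {p. coord a p < coord b p}"
proof -
  have "{p. coord a p < coord b p} =
      {p. inner (coord b (1, 0) - coord a (1, 0), coord b (0, 1) - coord a (0, 1)) p > 0}"
    by (auto simp: coord_def inner_prod_def algebra_simps)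
  then show ?thesis by (simp add: convex_halfspace_gt)
qed

(* Sector k is the closed cone where the values x, 0, y of p = (x, y) appear in the order given
   by sector_order k; the six sectors are listed clockwise from the second quadrant, and sector k
   meets sector (k + 1) mod 6 along a ray. *)
definition sector_order :: "nat \<Rightarrow> nat \<times> nat \<times> nat" where
  "sector_order k = [(0, 1, 2), (1, 0, 2), (1, 2, 0), (2, 1, 0), (2, 0, 1), (0, 2, 1)] ! k"

definition sector :: "nat \<Rightarrow> pt set" where
  "sector k = (case sector_order k of (a, b, c) \<Rightarrow> {p. coord a p \<le> coord b p \<and> coord b p \<le> coord c p})"

lemma less_6_cases: "k < (6::nat) \<Longrightarrow> k = 0 \<or> k = 1 \<or> k = 2 \<or> k = 3 \<or> k = 4 \<or> k = 5"
  by auto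

lemma sector_order_permutation:
  assumes "k < 6" "sector_order k = (a, b, c)"
  shows "a \<noteq> b \<and> a \<noteq> c \<and> b \<noteq> c \<and> {a, b, c} = {0, 1, 2}"
  using less_6_cases[OF assms(1)] assms(2) by (auto simp: sector_order_def)

lemma sectors_cover: "\<exists>k<6. p \<in> sector k"
proof -
  have "\<exists>k\<in>{0, 1, 2, 3, 4, 5}. p \<in> sector k"
    by (auto simp: sector_def sector_order_def coord_def)
  then obtain k where "k \<in> {0, 1, 2, 3, 4, 5}" "p \<in> sector k" by blast
  then show ?thesis by (intro exI[of _ k]) auto
qed

lemma strictly_ordered_point:
  assumes "a \<noteq> b" "a \<noteq> c" "b \<noteq> c" "{a, b, c} \<subseteq> {0, 1, 2}"
  shows "\<exists>r. coord a r < coord b r \<and> coord b r < coord c r"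
proof -
  define rank :: "nat \<Rightarrow> real" where "rank i = (if i = a then 0 else if i = b then 1 else 2)" for i
  have "coord i (rank 0 - rank 1, rank 2 - rank 1) = rank i - rank 1" if "i \<in> {0, 1, 2}" for i
    using that by (auto simp: coord_def)
  then show ?thesis
    using assms by (intro exI[of _ "(rank 0 - rank 1, rank 2 - rank 1)"]) (auto simp: rank_def)
qed

lemma selection_coord_on_sector:
  fixes H :: "pt \<Rightarrow> real"
  assumes H: "continuous_on UNIV H" and sel: "\<And>p. H p \<in> {fst p, 0, snd p}" and "k < 6"
  shows "\<exists>l\<in>{0, 1, 2}. \<forall>p\<in>sector k. H p = coord l p"
proof -
  obtain a b c where abc: "sector_order k = (a, b, c)" by (metis prod_cases3)
  note perm = sector_order_permutation[OF \<open>k < 6\<close> abc]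
  define U where "U = {p. coord a p < coord b p} \<inter> {p. coord b p < coord c p}"
  obtain r where "r \<in> U"
    using strictly_ordered_point[of a b c] perm unfolding U_def by auto
  have "\<exists>l\<in>{0, 1, 2}. \<forall>p\<in>U. H p = coord l p"
  proof (rule connected_continuous_selection)
    show "connected U" unfolding U_def by (intro convex_connected convex_Int convex_coord_less)
    show "\<exists>l\<in>{0, 1, 2}. H p = coord l p" for p
      using sel[of p] by (auto simp: coord_def)
    show "inj_on (\<lambda>l. coord l p) {0, 1, 2}" if "p \<in> U" for p
    proof -
      have "inj_on (\<lambda>l. coord l p) {a, b, c}"
        using that unfolding U_def inj_on_def by force
      then show ?thesis using perm by simp
    qed
  qed (use \<open>r \<in> U\<close> continuous_on_subset[OF H] continuous_on_coord in auto)
  then obtain l where l: "l \<in> {0, 1, 2}" "\<forall>p\<in>U. H p = coord l p" by blast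
  have "sector k \<subseteq> closure U"
  proof
    fix p assume "p \<in> sector k"
    then have "coord a p \<le> coord b p" "coord b p \<le> coord c p"
      using abc by (auto simp: sector_def)
    moreover have "coord a r < coord b r" "coord b r < coord c r"
      using \<open>r \<in> U\<close> by (auto simp: U_def)
    ultimately have "p + e *\<^sub>R r \<in> U" if "e > 0" for e
      unfolding U_def using that by (auto simp: coord_add_scaleR intro!: add_le_less_mono)
    then show "p \<in> closure U" by (rule in_closure_if_ray_in)
  qed
  also have "closure U \<subseteq> {p. H p = coord l p}"
    using l(2) by (intro closure_minimal closed_Collect_eq H continuous_on_coord) auto
  finally show ?thesis using l(1) by blast
qed

(* Rows: a labelling of the six sectors and the max-min term realising it.  The one consistent
   labelling missing here is [1, 0, 2, 1, 0, 2], that of the median of x, 0, y. *)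
definition maxmin_table :: "(nat list \<times> real \<times> real \<times> nat \<times> nat \<times> nat) list" where
  "maxmin_table =
    [([0, 0, 0, 0, 0, 0], 1, 1, 0, 0, 0),
     ([1, 1, 1, 1, 1, 1], 1, 1, 1, 1, 1),
     ([2, 2, 2, 2, 2, 2], 1, 1, 2, 2, 2),
     ([0, 0, 2, 1, 0, 0], -1, -1, 0, 1, 2),
     ([0, 0, 2, 2, 2, 0], -1, -1, 0, 2, 2),
     ([0, 1, 1, 1, 0, 0], -1, -1, 0, 1, 1),
     ([0, 1, 1, 2, 2, 0], -1, 1, 0, 1, 2),
     ([1, 0, 0, 0, 0, 2], 1, -1, 0, 1, 2),
     ([1, 0, 0, 0, 1, 1], 1, -1, 0, 1, 1),
     ([1, 0, 2, 1, 1, 1], 1, -1, 1, 0, 2),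
     ([1, 0, 2, 2, 2, 2], -1, -1, 2, 0, 1),
     ([1, 1, 1, 1, 0, 2], -1, -1, 1, 0, 2),
     ([1, 1, 1, 2, 2, 2], -1, -1, 1, 2, 2),
     ([2, 2, 0, 0, 0, 2], 1, -1, 0, 2, 2),
     ([2, 2, 0, 0, 1, 1], 1, 1, 0, 1, 2),
     ([2, 2, 2, 1, 0, 2], 1, -1, 2, 0, 1),
     ([2, 2, 2, 1, 1, 1], 1, -1, 1, 2, 2)]"

lemma maxmin_table_sector_values:
  assumes "(ls, s1, s2, i1, i2, i3) \<in> set maxmin_table" "k < 6" "p \<in> sector k"
  shows "maxmin s1 s2 (coord i1 p) (coord i2 p) (coord i3 p) = coord (ls ! k) p"
  using assms(1) less_6_cases[OF assms(2)] assms(3)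
  unfolding maxmin_table_def
  by (auto simp: sector_def sector_order_def maxmin_signs coord_simps max_def min_def)

lemma wall_consistent_labelings:
  assumes "{l0, l1, l2, l3, l4, l5} \<subseteq> {0, 1, 2}"
    and "coord l0 (0, 1) = coord l1 (0, 1)" "coord l1 (1, 1) = coord l2 (1, 1)"
      "coord l2 (1, 0) = coord l3 (1, 0)" "coord l3 (0, -1) = coord l4 (0, -1)"
      "coord l4 (-1, -1) = coord l5 (-1, -1)" "coord l5 (-1, 0) = coord l0 (-1, 0)"
  shows "[l0, l1, l2, l3, l4, l5] = [1, 0, 2, 1, 0, 2] \<or> [l0, l1, l2, l3, l4, l5] \<in> fst ` set maxmin_table"
proof -
  have "\<forall>l0\<in>{0, 1, 2}. \<forall>l1\<in>{0, 1, 2}. \<forall>l2\<in>{0, 1, 2}. \<forall>l3\<in>{0, 1, 2}. \<forall>l4\<in>{0, 1, 2}. \<forall>l5\<in>{0, 1, 2}.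
      coord l0 (0, 1) = coord l1 (0, 1) \<longrightarrow> coord l1 (1, 1) = coord l2 (1, 1) \<longrightarrow>
      coord l2 (1, 0) = coord l3 (1, 0) \<longrightarrow> coord l3 (0, -1) = coord l4 (0, -1) \<longrightarrow>
      coord l4 (-1, -1) = coord l5 (-1, -1) \<longrightarrow> coord l5 (-1, 0) = coord l0 (-1, 0) \<longrightarrow>
      [l0, l1, l2, l3, l4, l5] = [1, 0, 2, 1, 0, 2] \<or> [l0, l1, l2, l3, l4, l5] \<in> fst ` set maxmin_table"
    by (simp add: coord_def maxmin_table_def)
  then show ?thesis using assms by blast
qed

lemma maxmin_table_signs:
  "(ls, s1, s2, i1, i2, i3) \<in> set maxmin_table \<Longrightarrow> s1 \<in> {-1, 1} \<and> s2 \<in> {-1, 1}"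
  by (auto simp: maxmin_table_def)

lemma sector_labels_cases:
  fixes H :: "pt \<Rightarrow> real" and l :: "nat \<Rightarrow> nat"
  assumes l: "\<And>k. k < 6 \<Longrightarrow> l k \<in> {0, 1, 2} \<and> (\<forall>p\<in>sector k. H p = coord (l k) p)"
  shows "[l 0, l 1, l 2, l 3, l 4, l 5] = [1, 0, 2, 1, 0, 2] \<or>
    [l 0, l 1, l 2, l 3, l 4, l 5] \<in> fst ` set maxmin_table"
proof -
  have on: "H p = coord (l k) p" if "k < 6" "p \<in> sector k" for k p
    using l that by blast
  have walls: "(0, 1) \<in> sector 0 \<inter> sector 1" "(1, 1) \<in> sector 1 \<inter> sector 2"
    "(1, 0) \<in> sector 2 \<inter> sector 3" "(0, -1) \<in> sector 3 \<inter> sector 4"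
    "(-1, -1) \<in> sector 4 \<inter> sector 5" "(-1, 0) \<in> sector 5 \<inter> sector 0"
    by (simp_all add: sector_def sector_order_def coord_def)
  show ?thesis
  proof (rule wall_consistent_labelings)
    show "{l 0, l 1, l 2, l 3, l 4, l 5} \<subseteq> {0, 1, 2}"
      using l[of 0] l[of 1] l[of 2] l[of 3] l[of 4] l[of 5] by simp
    show "coord (l 0) (0, 1) = coord (l 1) (0, 1)"
      using on[of 0 "(0, 1)"] on[of 1 "(0, 1)"] walls(1) by auto
    show "coord (l 1) (1, 1) = coord (l 2) (1, 1)"
      using on[of 1 "(1, 1)"] on[of 2 "(1, 1)"] walls(2) by auto
    show "coord (l 2) (1, 0) = coord (l 3) (1, 0)"
      using on[of 2 "(1, 0)"] on[of 3 "(1, 0)"] walls(3) by auto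
    show "coord (l 3) (0, -1) = coord (l 4) (0, -1)"
      using on[of 3 "(0, -1)"] on[of 4 "(0, -1)"] walls(4) by auto
    show "coord (l 4) (-1, -1) = coord (l 5) (-1, -1)"
      using on[of 4 "(-1, -1)"] on[of 5 "(-1, -1)"] walls(5) by auto
    show "coord (l 5) (-1, 0) = coord (l 0) (-1, 0)"
      using on[of 5 "(-1, 0)"] on[of 0 "(-1, 0)"] walls(6) by auto
  qed
qed

lemma coord_mem: "coord i \<in> {fst, \<lambda>_. 0, snd}"
  by (cases "i = 0"; cases "i = 1") (simp_all add: coord_def fun_eq_iff)

lemma planar_selection_cases:
  fixes H :: "pt \<Rightarrow> real"
  assumes H: "continuous_on UNIV H" and sel: "\<And>p. H p \<in> {fst p, 0, snd p}"
  shows "(\<forall>p. H p = 0 \<longleftrightarrow> fst p * snd p \<le> 0) \<or> maxmin_of {fst, \<lambda>_. 0, snd} H"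
proof -
  obtain l where l: "\<And>k. k < 6 \<Longrightarrow> l k \<in> {0, 1, 2} \<and> (\<forall>p\<in>sector k. H p = coord (l k) p)"
    using selection_coord_on_sector[OF H sel] by metis
  have on: "H p = coord ([l 0, l 1, l 2, l 3, l 4, l 5] ! k) p" if "k < 6" "p \<in> sector k" for k p
    using l[OF that(1)] that(2) less_6_cases[OF that(1)] by auto
  have "[l 0, l 1, l 2, l 3, l 4, l 5] = [1, 0, 2, 1, 0, 2] \<or>
      [l 0, l 1, l 2, l 3, l 4, l 5] \<in> fst ` set maxmin_table"
    by (rule sector_labels_cases[where H = H]) (use l in blast)
  then show ?thesis
  proof (elim disjE imageE)
    assume "[l 0, l 1, l 2, l 3, l 4, l 5] = [1, 0, 2, 1, 0, 2]"
    then have "H p = 0 \<longleftrightarrow> fst p * snd p \<le> 0" if "k < 6" "p \<in> sector k" for k p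
      using on[OF that] less_6_cases[OF that(1)] that(2)
      by (auto simp: sector_def sector_order_def coord_def mult_le_0_iff)
    then show ?thesis using sectors_cover by blast
  next
    fix t assume t: "t \<in> set maxmin_table" "[l 0, l 1, l 2, l 3, l 4, l 5] = fst t"
    obtain s1 s2 i1 i2 i3 where t_eq: "t = ([l 0, l 1, l 2, l 3, l 4, l 5], s1, s2, i1, i2, i3)"
      using t(2) by (metis prod.collapse)
    have "H p = maxmin s1 s2 (coord i1 p) (coord i2 p) (coord i3 p)" for p
      using sectors_cover[of p] on maxmin_table_sector_values t(1) t_eq by metis
    then show ?thesis
      using maxmin_table_signs t(1) t_eq
      by (intro disjI2 maxmin_ofI[OF _ _ coord_mem coord_mem coord_mem]) auto
  qed
qed

lemma opposite_quadrants_interior_not_connected: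
  fixes S :: "pt set"
  assumes inner: "{p. fst p * snd p < 0} \<subseteq> S" and outer: "S \<subseteq> {p. fst p * snd p \<le> 0}"
  shows "\<not> connected (interior S)"
proof
  assume conn: "connected (interior S)"
  define A where "A = {p :: pt. fst p \<le> 0 \<and> 0 \<le> snd p}"
  define B where "B = {p :: pt. snd p \<le> 0 \<and> 0 \<le> fst p}"
  have closed: "closed A" "closed B"
    unfolding A_def B_def by (intro closed_Collect_conj closed_Collect_le continuous_intros; simp)+
  have "S \<subseteq> A \<union> B"
    using outer by (auto simp: A_def B_def mult_le_0_iff)
  then have "interior S \<subseteq> A \<union> B"
    using interior_subset by blast
  have "0 \<notin> interior S"
  proof
    assume "0 \<in> interior S"
    have "0 \<in> closure {p :: pt. 0 < fst p \<and> 0 < snd p}"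
      by (rule in_closure_if_ray_in[where r = "(1, 1)"]) simp
    moreover have "S \<inter> {p. 0 < fst p \<and> 0 < snd p} = {}"
      using outer by (auto simp: mult_le_0_iff)
    then have "interior S \<inter> {p. 0 < fst p \<and> 0 < snd p} = {}"
      using interior_subset by blast
    then have "interior S \<inter> closure {p. 0 < fst p \<and> 0 < snd p} = {}"
      by (simp add: open_Int_closure_eq_empty)
    ultimately show False
      using \<open>0 \<in> interior S\<close> by (metis IntI empty_iff)
  qed
  moreover have "A \<inter> B \<subseteq> {0}"
    by (auto simp: A_def B_def prod_eq_iff)
  ultimately have "A \<inter> B \<inter> interior S = {}"
    by blast
  have "{p. fst p * snd p < 0} \<subseteq> interior S"
    using inner by (intro interior_maximal open_Collect_less continuous_intros)
  then have "(-1, 1) \<in> interior S" "(1, -1) \<in> interior S" by auto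
  moreover have "(-1, 1) \<in> A" "(1, -1) \<in> B"
    by (simp_all add: A_def B_def)
  ultimately have "A \<inter> interior S \<noteq> {}" "B \<inter> interior S \<noteq> {}"
    by blast+
  moreover note closed \<open>interior S \<subseteq> A \<union> B\<close> \<open>A \<inter> B \<inter> interior S = {}\<close>
  ultimately show False
    using conn unfolding connected_closed by blast
qed

lemma planar_three_piece_maxmin:
  fixes H :: "pt \<Rightarrow> real" and Q1 Q2 Q3 :: "pt set"
  assumes H: "continuous_on UNIV H" and cover: "\<And>p. p \<in> Q1 \<union> Q2 \<union> Q3"
    and on: "\<And>p. p \<in> Q1 \<Longrightarrow> H p = fst p" "\<And>p. p \<in> Q2 \<Longrightarrow> H p = 0" "\<And>p. p \<in> Q3 \<Longrightarrow> H p = snd p"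
    and conn: "connected (interior Q2)"
  shows "maxmin_of {fst, \<lambda>_. 0, snd} H"
proof -
  have "H p \<in> {fst p, 0, snd p}" for p
    using cover[of p] on by blast
  from planar_selection_cases[OF H this] show ?thesis
  proof (elim disjE)
    assume zero: "\<forall>p. H p = 0 \<longleftrightarrow> fst p * snd p \<le> 0"
    have "{p :: pt. fst p * snd p < 0} \<subseteq> Q2"
    proof
      fix p :: pt assume "p \<in> {p. fst p * snd p < 0}"
      then have "fst p * snd p < 0" by simp
      then have "H p = 0" "fst p \<noteq> 0" "snd p \<noteq> 0" using zero[rule_format, of p] by auto
      then show "p \<in> Q2" using cover[of p] on(1)[of p] on(3)[of p] by auto
    qed
    moreover have "Q2 \<subseteq> {p. fst p * snd p \<le> 0}"
      using on(2) zero by blast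
    ultimately show ?thesis
      using opposite_quadrants_interior_not_connected conn by blast
  qed
qed

section \<open>Selections of two linear forms and zero\<close>

lemma dependent_forms_maxmin:
  fixes G :: "'a::real_inner \<Rightarrow> real" and e v :: 'a
  defines "z \<equiv> \<lambda>x. inner e (x - v)"
  assumes G: "continuous_on UNIV G" and sel: "\<And>x. G x \<in> {\<alpha> * z x, 0, \<gamma> * z x}"
  shows "maxmin_of {\<lambda>x. \<alpha> * z x, \<lambda>_. 0, \<lambda>x. \<gamma> * z x} G"
proof -
  have zc: "continuous_on S z" for S unfolding z_def by (intro continuous_intros)
  have pos: "{x. z x > 0} = {x. inner e x > inner e v}" and neg: "{x. z x < 0} = {x. inner e x < inner e v}"
    by (auto simp: z_def inner_diff_right)
  have half: "\<exists>\<mu>\<in>{\<alpha>, 0, \<gamma>}. \<forall>x\<in>S. G x = \<mu> * z x" if "convex S" "\<forall>x\<in>S. z x \<noteq> 0" for S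
    by (rule connected_selection_of_multiples)
      (use that sel continuous_on_subset[OF G] zc in \<open>auto intro: convex_connected\<close>)
  have "convex {x. z x > 0}" unfolding pos by (rule convex_halfspace_gt)
  moreover have "\<forall>x\<in>{x. z x > 0}. z x \<noteq> 0" by simp
  ultimately obtain \<mu> where \<mu>: "\<mu> \<in> {\<alpha>, 0, \<gamma>}" "\<forall>x\<in>{x. z x > 0}. G x = \<mu> * z x"
    using half by blast
  have "convex {x. z x < 0}" unfolding neg by (rule convex_halfspace_lt)
  moreover have "\<forall>x\<in>{x. z x < 0}. z x \<noteq> 0" by simp
  ultimately obtain \<nu> where \<nu>: "\<nu> \<in> {\<alpha>, 0, \<gamma>}" "\<forall>x\<in>{x. z x < 0}. G x = \<nu> * z x"
    using half by blast
  have zero: "G x = 0" if "z x = 0" for x using sel[of x] that by auto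
  have mem: "(\<lambda>x. \<kappa> * z x) \<in> {\<lambda>x. \<alpha> * z x, \<lambda>_. 0, \<lambda>x. \<gamma> * z x}" if "\<kappa> \<in> {\<alpha>, 0, \<gamma>}" for \<kappa>
    using that by auto
  show ?thesis
  proof (cases "\<nu> \<le> \<mu>")
    case True
    have "G x = maxmin 1 1 (\<mu> * z x) (\<nu> * z x) (\<nu> * z x)" for x
      using \<mu>(2) \<nu>(2) zero[of x] True
      by (cases "z x" "0 :: real" rule: linorder_cases)
        (auto simp: maxmin_signs max_def mult_right_mono mult_right_mono_neg)
    then show ?thesis by (rule maxmin_ofI[OF _ _ mem[OF \<mu>(1)] mem[OF \<nu>(1)] mem[OF \<nu>(1)], rotated 2]) auto
  next
    case False
    have "G x = maxmin (-1) 1 (\<mu> * z x) (\<nu> * z x) (\<nu> * z x)" for x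
      using \<mu>(2) \<nu>(2) zero[of x] False
      by (cases "z x" "0 :: real" rule: linorder_cases)
        (auto simp: maxmin_signs min_def mult_right_mono mult_right_mono_neg)
    then show ?thesis by (rule maxmin_ofI[OF _ _ mem[OF \<mu>(1)] mem[OF \<nu>(1)] mem[OF \<nu>(1)], rotated 2]) auto
  qed
qed

lemma inj_inner_pair:
  fixes a c :: pt
  assumes "fst a * snd c \<noteq> snd a * fst c"
  shows "inj (\<lambda>y. (inner a y, inner c y))"
proof (intro injI)
  have kernel: "y = 0" if "inner a y = 0" "inner c y = 0" for y
  proof -
    have "(fst a * snd c - snd a * fst c) * fst y = snd c * inner a y - snd a * inner c y"
      "(fst a * snd c - snd a * fst c) * snd y = fst a * inner c y - fst c * inner a y"
      by (simp_all add: inner_prod_def algebra_simps)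
    then show ?thesis using that assms by (simp add: prod_eq_iff)
  qed
  fix y z assume "(inner a y, inner c y) = (inner a z, inner c z)"
  then have "inner a (y - z) = 0" "inner c (y - z) = 0" by (simp_all add: inner_diff_right)
  then have "y - z = 0" by (rule kernel)
  then show "y = z" by simp
qed

lemma common_direction_if_cross_eq:
  fixes a c :: pt
  assumes "fst a * snd c = snd a * fst c"
  obtains e \<alpha> \<gamma> where "a = \<alpha> *\<^sub>R e" "c = \<gamma> *\<^sub>R e"
proof (cases "a = 0")
  case True
  then have "a = 0 *\<^sub>R c" "c = 1 *\<^sub>R c" by simp_all
  then show ?thesis by (rule that)
next
  case False
  have "c = (fst c / fst a) *\<^sub>R a \<or> c = (snd c / snd a) *\<^sub>R a"
  proof (cases "fst a = 0")
    case True
    then have "snd a \<noteq> 0" "fst c = 0" using False assms by (auto simp: prod_eq_iff)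
    then show ?thesis using True by (simp add: prod_eq_iff)
  next
    case False
    then show ?thesis using assms by (simp add: prod_eq_iff field_simps)
  qed
  then obtain \<gamma> where "c = \<gamma> *\<^sub>R a" by blast
  moreover have "a = 1 *\<^sub>R a" by simp
  ultimately show ?thesis using that by blast
qed

lemma connected_interior_affine_image:
  fixes M :: "'a::euclidean_space \<Rightarrow> 'a"
  assumes "linear M" "inj M" "connected (interior S)"
  shows "connected (interior ((\<lambda>x. M (x - v)) ` S))"
proof -
  have "(\<lambda>x. M (x - v)) ` T = M ` ((\<lambda>x. x - v) ` T)" for T by (simp add: image_image)
  then have "interior ((\<lambda>x. M (x - v)) ` S) = (\<lambda>x. M (x - v)) ` interior S"
    by (simp only: interior_injective_linear_image[OF assms(1,2)] interior_translation_subtract)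
  moreover have "continuous_on UNIV M"
    using assms(1) by (simp add: linear_continuous_on linear_conv_bounded_linear)
  then have "continuous_on (interior S) (\<lambda>x. M (x - v))"
    by (rule continuous_on_compose2) (auto intro: continuous_intros)
  ultimately show ?thesis
    using connected_continuous_image assms(3) by metis
qed

lemma independent_forms_three_piece_maxmin:
  fixes G :: "pt \<Rightarrow> real" and a c v :: pt and P1 P2 P3 :: "pt set"
  defines "u \<equiv> \<lambda>x. inner a (x - v)" and "w \<equiv> \<lambda>x. inner c (x - v)"
  assumes inj: "inj (\<lambda>y. (inner a y, inner c y))" and G: "continuous_on UNIV G"
    and cover: "\<And>x. x \<in> P1 \<union> P2 \<union> P3"
    and on: "\<And>x. x \<in> P1 \<Longrightarrow> G x = u x" "\<And>x. x \<in> P2 \<Longrightarrow> G x = 0" "\<And>x. x \<in> P3 \<Longrightarrow> G x = w x"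
    and conn: "connected (interior P2)"
  shows "maxmin_of {u, \<lambda>_. 0, w} G"
proof -
  define M where "M = (\<lambda>y. (inner a y, inner c y))"
  have "linear M"
    unfolding M_def by (intro bounded_linear.linear bounded_linear_Pair bounded_linear_inner_right)
  moreover have "inj M" using inj by (simp add: M_def)
  ultimately obtain M' where "linear M'" and M'M: "\<And>y. M' (M y) = y" and MM': "\<And>p. M (M' p) = p"
    using linear_injective_isomorphism by blast
  define L where "L x = M (x - v)" for x
  have L: "L x = (u x, w x)" for x by (simp add: L_def M_def u_def w_def)
  have L_inv: "v + M' (L x) = x" for x by (simp add: L_def M'M)
  have "continuous_on UNIV (\<lambda>p. v + M' p)"
    using \<open>linear M'\<close> by (intro continuous_intros) (simp add: linear_continuous_on linear_conv_bounded_linear)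
  then have H: "continuous_on UNIV (\<lambda>p. G (v + M' p))"
    by (rule continuous_on_compose2[OF G]) auto
  have "connected (interior (L ` P2))"
    unfolding L_def by (rule connected_interior_affine_image[OF \<open>linear M\<close> \<open>inj M\<close> conn])
  have "maxmin_of {fst, \<lambda>_. 0, snd} (\<lambda>p. G (v + M' p))"
  proof (rule planar_three_piece_maxmin[OF H])
    fix p
    have "p = L (v + M' p)" by (simp add: L_def MM')
    then show "p \<in> L ` P1 \<union> L ` P2 \<union> L ` P3"
      using cover[of "v + M' p"] by blast
  next
    fix p assume "p \<in> L ` P1"
    then show "G (v + M' p) = fst p" using on(1) L_inv L by force
  next
    fix p assume "p \<in> L ` P2"
    then show "G (v + M' p) = 0" using on(2) L_inv by force
  next
    fix p assume "p \<in> L ` P3"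
    then show "G (v + M' p) = snd p" using on(3) L_inv L by force
  qed fact
  then have "maxmin_of ((\<lambda>g. g \<circ> L) ` {fst, \<lambda>_. 0, snd}) ((\<lambda>p. G (v + M' p)) \<circ> L)"
    by (rule maxmin_of_compose)
  moreover have "fst \<circ> L = u" "(\<lambda>_. 0) \<circ> L = (\<lambda>_. 0)" "snd \<circ> L = w"
    by (simp_all add: fun_eq_iff L)
  moreover have "(\<lambda>p. G (v + M' p)) \<circ> L = G"
    by (simp add: fun_eq_iff L_inv)
  ultimately show ?thesis by simp
qed

lemma affine_fun_at:
  assumes "affine_fun h"
  shows "\<exists>a. \<forall>x. h x = h v + inner a (x - v)"
proof -
  obtain \<alpha> \<beta> \<gamma> where "\<And>x. h x = \<alpha> * fst x + \<beta> * snd x + \<gamma>"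
    using assms unfolding affine_fun_def by blast
  then show ?thesis by (intro exI[of _ "(\<alpha>, \<beta>)"]) (simp add: inner_prod_def algebra_simps)
qed

lemma continuous_on_affine_fun:
  assumes "affine_fun h"
  shows "continuous_on S h"
proof -
  obtain \<alpha> \<beta> \<gamma> where "h = (\<lambda>x. \<alpha> * fst x + \<beta> * snd x + \<gamma>)"
    using assms unfolding affine_fun_def by blast
  then show ?thesis by (auto intro!: continuous_intros)
qed

lemma affine_three_piece_maxmin:
  fixes F k1 k2 k3 :: "pt \<Rightarrow> real" and v :: pt and P1 P2 P3 :: "pt set"
  assumes F: "continuous_on UNIV F" and aff: "affine_fun k1" "affine_fun k2" "affine_fun k3"
    and at_v: "k1 v = F v" "k2 v = F v" "k3 v = F v"
    and cover: "\<And>x. x \<in> P1 \<union> P2 \<union> P3"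
    and on: "\<And>x. x \<in> P1 \<Longrightarrow> F x = k1 x" "\<And>x. x \<in> P2 \<Longrightarrow> F x = k2 x" "\<And>x. x \<in> P3 \<Longrightarrow> F x = k3 x"
    and conn: "connected (interior P2)"
  shows "maxmin_of {k1, k2, k3} F"
proof -
  obtain a1 a2 a3 where
    a: "\<And>x. k1 x = F v + inner a1 (x - v)" "\<And>x. k2 x = F v + inner a2 (x - v)"
      "\<And>x. k3 x = F v + inner a3 (x - v)"
    using affine_fun_at[OF aff(1)] affine_fun_at[OF aff(2)] affine_fun_at[OF aff(3)] at_v by metis
  define u where "u = (\<lambda>x. inner (a1 - a2) (x - v))"
  define w where "w = (\<lambda>x. inner (a3 - a2) (x - v))"
  have k1: "k1 x = k2 x + u x" and k3: "k3 x = k2 x + w x" for x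
    by (simp_all add: a u_def w_def inner_diff_left)
  define G where "G x = F x - k2 x" for x
  have G: "continuous_on UNIV G"
    unfolding G_def by (intro continuous_intros F continuous_on_affine_fun aff(2))
  have on_G: "\<And>x. x \<in> P1 \<Longrightarrow> G x = u x" "\<And>x. x \<in> P2 \<Longrightarrow> G x = 0" "\<And>x. x \<in> P3 \<Longrightarrow> G x = w x"
    using on k1 k3 by (simp_all add: G_def)
  have "maxmin_of {u, \<lambda>_. 0, w} G"
  proof (cases "fst (a1 - a2) * snd (a3 - a2) = snd (a1 - a2) * fst (a3 - a2)")
    case False
    then show ?thesis
      using independent_forms_three_piece_maxmin[OF inj_inner_pair[OF False] G cover] on_G conn
      unfolding u_def w_def by blast
  next
    case True
    then obtain e \<alpha> \<gamma> where "a1 - a2 = \<alpha> *\<^sub>R e" "a3 - a2 = \<gamma> *\<^sub>R e"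
      by (rule common_direction_if_cross_eq)
    then have uw: "u = (\<lambda>x. \<alpha> * inner e (x - v))" "w = (\<lambda>x. \<gamma> * inner e (x - v))"
      by (simp_all add: u_def w_def)
    have "G x \<in> {u x, 0, w x}" for x
      using cover[of x] on_G by blast
    then show ?thesis
      unfolding uw by (intro dependent_forms_maxmin G) simp
  qed
  then have "maxmin_of ((\<lambda>g x. g x + k2 x) ` {u, \<lambda>_. 0, w}) (\<lambda>x. G x + k2 x)"
    by (rule maxmin_of_add)
  moreover have "(\<lambda>x. u x + k2 x) = k1" "(\<lambda>x. 0 + k2 x) = k2" "(\<lambda>x. w x + k2 x) = k3"
    "(\<lambda>x. G x + k2 x) = F"
    by (simp_all add: fun_eq_iff k1 k3 G_def)
  ultimately show ?thesis by (simp add: insert_commute)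
qed

section \<open>Pieces of a v-function contain v\<close>

lemma line2_through:
  assumes "a \<in> line2 b u" "a + t *\<^sub>R d \<in> line2 b u" "t \<noteq> 0"
  shows "a + s *\<^sub>R d \<in> line2 b u"
proof -
  obtain r1 r2 where r: "a = b + r1 *\<^sub>R u" "a + t *\<^sub>R d = b + r2 *\<^sub>R u"
    using assms(1,2) unfolding line2_def by blast
  then have "t *\<^sub>R d = (r2 - r1) *\<^sub>R u" by (simp add: algebra_simps)
  moreover have "d = (1 / t) *\<^sub>R (t *\<^sub>R d)" using \<open>t \<noteq> 0\<close> by simp
  ultimately have "d = ((r2 - r1) / t) *\<^sub>R u" by simp
  then have "a + s *\<^sub>R d = b + (r1 + s * ((r2 - r1) / t)) *\<^sub>R u"
    using r(1) by (simp add: algebra_simps)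
  then show ?thesis unfolding line2_def by blast
qed

lemma non_vertex_ray_extends_backwards:
  fixes Fr :: "pt set"
  assumes "a \<in> Fr" "\<not> vertex_of Fr a" "d \<noteq> 0" "\<And>s. s \<ge> 0 \<Longrightarrow> a + s *\<^sub>R d \<in> Fr" "\<epsilon> > 0"
  obtains t where "t > 0" "\<And>s. 0 \<le> s \<Longrightarrow> s \<le> t \<Longrightarrow> a - s *\<^sub>R d \<in> Fr \<inter> ball a \<epsilon>"
proof -
  obtain e0 b u where "e0 > 0" and line: "Fr \<inter> ball a e0 = line2 b u \<inter> ball a e0"
    using assms(1,2) unfolding vertex_of_def by blast
  define e where "e = min e0 \<epsilon>"
  define t where "t = e / (2 * norm d)"
  have "e > 0" "t > 0" using \<open>e0 > 0\<close> \<open>\<epsilon> > 0\<close> \<open>d \<noteq> 0\<close> by (simp_all add: e_def t_def)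
  have small: "ball a e \<subseteq> ball a e0 \<inter> ball a \<epsilon>" by (auto simp: e_def)
  have in_ball: "a + s *\<^sub>R d \<in> ball a e" if "\<bar>s\<bar> \<le> t" for s
  proof -
    have "\<bar>s\<bar> * norm d \<le> t * norm d" using that by (simp add: mult_right_mono)
    also have "\<dots> < e" using \<open>e > 0\<close> \<open>d \<noteq> 0\<close> by (simp add: t_def)
    finally show ?thesis by (simp add: dist_norm)
  qed
  have "a + t *\<^sub>R d \<in> Fr \<inter> ball a e0"
    using assms(4)[of t] in_ball[of t] small \<open>t > 0\<close> by auto
  moreover have "a \<in> Fr \<inter> ball a e0" using assms(1) \<open>e0 > 0\<close> by simp
  ultimately have "a + t *\<^sub>R d \<in> line2 b u" "a \<in> line2 b u"
    unfolding line by blast+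
  have segment: "a - s *\<^sub>R d \<in> Fr \<inter> ball a \<epsilon>" if "0 \<le> s" "s \<le> t" for s
  proof -
    have "a - s *\<^sub>R d \<in> ball a e" using in_ball[of "- s"] that by simp
    moreover have "a - s *\<^sub>R d \<in> line2 b u"
      using line2_through[OF \<open>a \<in> line2 b u\<close> \<open>a + t *\<^sub>R d \<in> line2 b u\<close>, of "- s"] \<open>t > 0\<close> by simp
    ultimately have "a - s *\<^sub>R d \<in> line2 b u \<inter> ball a e0" "a - s *\<^sub>R d \<in> ball a \<epsilon>"
      using small by blast+
    then show ?thesis unfolding line[symmetric] by blast
  qed
  show ?thesis by (rule that[OF \<open>t > 0\<close> segment])
qed

lemma ray_edge_endpoint_is_vertex:
  fixes Fr C :: "pt set"
  defines "V \<equiv> {x. vertex_of Fr x}"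
  assumes "closed Fr" "finite V" and C: "C \<in> components (Fr - V)"
    and ray: "closure C = ray2 a d" and "d \<noteq> 0"
  shows "vertex_of Fr a"
proof (rule ccontr)
  assume not_vertex: "\<not> vertex_of Fr a"
  have "C \<subseteq> Fr - V" using C by (rule in_components_subset)
  have "a \<in> closure C" unfolding ray ray2_def by force
  moreover have "closure C \<subseteq> Fr"
    using \<open>C \<subseteq> Fr - V\<close> \<open>closed Fr\<close> by (intro closure_minimal) auto
  ultimately have "a \<in> Fr - V" using not_vertex by (auto simp: V_def)
  obtain T where "closed T" "C = (Fr - V) \<inter> T"
    using closedin_component[OF C] unfolding closedin_closed by blast
  then have "a \<in> C"
    using \<open>a \<in> closure C\<close> \<open>a \<in> Fr - V\<close> closure_minimal[of C T] by blast
  have "open (- V)" using \<open>finite V\<close> by (simp add: finite_imp_closed open_Compl)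
  then obtain \<epsilon> where "\<epsilon> > 0" "ball a \<epsilon> \<subseteq> - V"
    using \<open>a \<in> Fr - V\<close> open_contains_ball by blast
  have "a \<in> Fr" using \<open>a \<in> Fr - V\<close> by blast
  moreover have "a + s *\<^sub>R d \<in> Fr" if "s \<ge> 0" for s
    using \<open>closure C \<subseteq> Fr\<close> that unfolding ray ray2_def by blast
  ultimately obtain t where "t > 0" and backwards: "\<And>s. 0 \<le> s \<Longrightarrow> s \<le> t \<Longrightarrow> a - s *\<^sub>R d \<in> Fr \<inter> ball a \<epsilon>"
    using non_vertex_ray_extends_backwards[OF _ not_vertex \<open>d \<noteq> 0\<close> _ \<open>\<epsilon> > 0\<close>] by metis
  define seg where "seg = (\<lambda>s. a - s *\<^sub>R d) ` {0..t}"
  have "seg \<subseteq> Fr - V"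
  proof
    fix y assume "y \<in> seg"
    then obtain s where "0 \<le> s" "s \<le> t" "y = a - s *\<^sub>R d" unfolding seg_def by auto
    then show "y \<in> Fr - V" using backwards[of s] \<open>ball a \<epsilon> \<subseteq> - V\<close> by blast
  qed
  moreover have "connected seg" unfolding seg_def by (intro connected_continuous_image continuous_intros) simp
  moreover have "a \<in> C \<inter> seg" using \<open>a \<in> C\<close> \<open>t > 0\<close> unfolding seg_def by force
  ultimately have "seg \<subseteq> C" using components_maximal[OF C] by blast
  moreover have "a - t *\<^sub>R d \<in> seg" using \<open>t > 0\<close> unfolding seg_def by force
  ultimately have "a - t *\<^sub>R d \<in> ray2 a d" using closure_subset ray by blast
  then obtain s where "0 \<le> s" "a - t *\<^sub>R d = a + s *\<^sub>R d" unfolding ray2_def by blast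
  then have "(s + t) *\<^sub>R d = 0" by (simp add: algebra_simps)
  then show False using \<open>0 \<le> s\<close> \<open>t > 0\<close> \<open>d \<noteq> 0\<close> by simp
qed

lemma vertex_in_closed_set_with_ray_edges:
  fixes P :: "pt set"
  assumes "closed P" "P \<noteq> {}" "P \<noteq> UNIV" "vertices P \<subseteq> {v}" "\<forall>E\<in>edges P. is_ray E"
  shows "v \<in> P"
proof -
  obtain y where "y \<in> frontier P" using frontier_not_empty[OF assms(2,3)] by blast
  have "frontier P \<subseteq> P" using \<open>closed P\<close> by (rule frontier_subset_closed)
  show ?thesis
  proof (cases "y \<in> vertices P")
    case True
    then show ?thesis using assms(4) \<open>y \<in> frontier P\<close> \<open>frontier P \<subseteq> P\<close> by blast
  next
    case False
    define C where "C = connected_component_set (frontier P - vertices P) y"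
    have C: "C \<in> components (frontier P - vertices P)"
      unfolding C_def components_iff using \<open>y \<in> frontier P\<close> False by blast
    then have "is_ray (closure C)" using assms(5) unfolding edges_def by blast
    then obtain a d where "d \<noteq> 0" and ray: "closure C = ray2 a d" unfolding is_ray_def by blast
    have "finite (vertices P)" using assms(4) finite_subset by blast
    then have "vertex_of (frontier P) a"
      using ray_edge_endpoint_is_vertex[OF frontier_closed _ _ ray \<open>d \<noteq> 0\<close>] C by (simp add: vertices_def)
    then have "a = v" using assms(4) by (auto simp: vertices_def)
    moreover have "a \<in> closure C" unfolding ray ray2_def by force
    moreover have "closure C \<subseteq> frontier P"
      using in_components_subset[OF C] by (intro closure_minimal) auto
    ultimately show ?thesis using \<open>frontier P \<subseteq> P\<close> by blast
  qed
qed

lemma admissibleD: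
  assumes "admissible f \<P>"
  shows "continuous_on UNIV f" "P \<in> \<P> \<Longrightarrow> polygon P" "\<Union>\<P> = UNIV"
    "P \<in> \<P> \<Longrightarrow> Q \<in> \<P> \<Longrightarrow> P \<noteq> Q \<Longrightarrow> P \<inter> Q = frontier P \<inter> frontier Q"
    "P \<in> \<P> \<Longrightarrow> \<exists>h. affine_fun h \<and> (\<forall>x\<in>P. f x = h x)"
  using assms by (simp_all add: admissible_def)

lemma v_functionD:
  assumes "v_function v f \<P>"
  shows "admissible f \<P>" "P \<in> \<P> \<Longrightarrow> vertices P \<subseteq> {v}" "P \<in> \<P> \<Longrightarrow> \<forall>E\<in>edges P. is_ray E"
  using assms by (auto simp: v_function_def)

lemma admissible_piece_neq_UNIV:
  assumes "admissible f \<P>" "card \<P> \<ge> 3" "P \<in> \<P>"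
  shows "P \<noteq> UNIV"
proof
  assume "P = UNIV"
  have "Q = {}" if "Q \<in> \<P>" "Q \<noteq> P" for Q
    using admissibleD(4)[OF assms(1) \<open>P \<in> \<P>\<close> that(1)] that(2) \<open>P = UNIV\<close> by simp
  then have "\<P> \<subseteq> {P, {}}" by blast
  then have "card \<P> \<le> card {P, {}}" by (intro card_mono) auto
  also have "\<dots> \<le> 2" by (rule card_insert_le_m1) auto
  finally show False using assms(2) by simp
qed

lemma v_function_component_at_vertex:
  assumes "v_function v f \<P>" "card \<P> \<ge> 3" "P \<in> \<P>"
  shows "\<exists>h. affine_component f P h \<and> h v = f v"
proof (cases "P = {}")
  case True
  \<comment> \<open>The definitions admit the empty polygon as a piece; any affine function is its component.\<close>
  have "\<forall>x. f v = 0 * fst x + 0 * snd x + f v" by simp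
  then have "affine_fun (\<lambda>_. f v)" unfolding affine_fun_def by blast
  then show ?thesis using True unfolding affine_component_def by blast
next
  case False
  note adm = v_functionD(1)[OF assms(1)]
  obtain h where h: "affine_fun h" "\<forall>x\<in>P. f x = h x"
    using admissibleD(5)[OF adm assms(3)] by blast
  have "closed P" using admissibleD(2)[OF adm assms(3)] by (simp add: polygon_def)
  then have "v \<in> P"
    using vertex_in_closed_set_with_ray_edges False admissible_piece_neq_UNIV[OF adm assms(2,3)]
      v_functionD(2,3)[OF assms(1,3)] by blast
  then show ?thesis using h unfolding affine_component_def by auto
qed

lemma maxmin_of_signed_form:
  assumes "maxmin_of \<Phi> f"
  obtains \<sigma>1 \<sigma>2 g1 g2 g3 where "\<sigma>1 \<in> {-1, 1}" "\<sigma>2 \<in> {-1, 1}"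
    and "\<forall>g\<in>{g1, g2, g3}. \<exists>h\<in>\<Phi>. \<exists>s\<in>{-1, 1}. g = (\<lambda>x. s * h x)"
    and "\<forall>x. f x = \<sigma>1 * max (g1 x) (\<sigma>2 * max (g2 x) (g3 x))"
proof -
  obtain s1 s2 g1 g2 g3 where s: "s1 \<in> {-1, 1}" "s2 \<in> {-1, 1}" and g: "g1 \<in> \<Phi>" "g2 \<in> \<Phi>" "g3 \<in> \<Phi>"
    and rep: "\<forall>x. f x = maxmin s1 s2 (g1 x) (g2 x) (g3 x)"
    using assms by (rule maxmin_ofE)
  have signed: "\<exists>h\<in>\<Phi>. \<exists>s\<in>{-1, 1}. (\<lambda>x. \<sigma> * g x) = (\<lambda>x. s * h x)" if "g \<in> \<Phi>" "\<sigma> \<in> {-1, 1}" for g \<sigma>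
    using that by blast
  have "s1 * s2 \<in> {-1, 1}" using s by auto
  show ?thesis
  proof (rule that[OF s])
    show "\<forall>g\<in>{\<lambda>x. s1 * g1 x, \<lambda>x. s1 * s2 * g2 x, \<lambda>x. s1 * s2 * g3 x}. \<exists>h\<in>\<Phi>. \<exists>s\<in>{-1, 1}. g = (\<lambda>x. s * h x)"
      using signed[OF g(1) s(1)] signed[OF g(2) \<open>s1 * s2 \<in> {-1, 1}\<close>] signed[OF g(3) \<open>s1 * s2 \<in> {-1, 1}\<close>]
      by simp
    show "\<forall>x. f x = s1 * max (s1 * g1 x) (s2 * max (s1 * s2 * g2 x) (s1 * s2 * g3 x))"
      using rep by (simp add: maxmin_def)
  qed
qed

lemma v_function_maxmin_of_components:
  assumes "v_function v f \<P>" "card \<P> = 3"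
  shows "maxmin_of {h. \<exists>P\<in>\<P>. affine_component f P h} f"
proof -
  note adm = v_functionD(1)[OF assms(1)]
  obtain P1 P2 P3 where P: "\<P> = {P1, P2, P3}"
    using assms(2) card_3_iff by metis
  then have "P1 \<in> \<P>" "P2 \<in> \<P>" "P3 \<in> \<P>" by auto
  then obtain k1 k2 k3 where
    k: "affine_component f P1 k1" "affine_component f P2 k2" "affine_component f P3 k3"
    and at_v: "k1 v = f v" "k2 v = f v" "k3 v = f v"
    using v_function_component_at_vertex[OF assms(1)] assms(2) by (metis order_refl)
  have "maxmin_of {k1, k2, k3} f"
  proof (rule affine_three_piece_maxmin[of f k1 k2 k3 v P1 P2 P3])
    show "x \<in> P1 \<union> P2 \<union> P3" for x using admissibleD(3)[OF adm] P by blast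
    show "connected (interior P2)" using admissibleD(2)[OF adm \<open>P2 \<in> \<P>\<close>] by (simp add: polygon_def)
  qed (use admissibleD(1)[OF adm] at_v k in \<open>auto simp: affine_component_def\<close>)
  moreover have "{k1, k2, k3} \<subseteq> {h. \<exists>P\<in>\<P>. affine_component f P h}"
    using k \<open>P1 \<in> \<P>\<close> \<open>P2 \<in> \<P>\<close> \<open>P3 \<in> \<P>\<close> by blast
  ultimately show ?thesis by (rule maxmin_of_mono)
qed

theorem lemma4p4:
  fixes v :: pt and f :: "pt \<Rightarrow> real" and \<P> :: "pt set set"
  assumes "f \<in> CPA3" and "v_function v f \<P>" and "card \<P> = 3"
  shows "\<exists>\<sigma>1 \<sigma>2 g1 g2 g3. \<sigma>1 \<in> {-1, 1} \<and> \<sigma>2 \<in> {-1, 1} \<and>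
     (\<forall>g\<in>{g1, g2, g3}. \<exists>P\<in>\<P>. \<exists>h s. affine_component f P h \<and> s \<in> {-1, 1::real} \<and> g = (\<lambda>x. s * h x)) \<and>
     (\<forall>x. f x = \<sigma>1 * max (g1 x) (\<sigma>2 * max (g2 x) (g3 x)))"
proof -
  \<comment> \<open>The hypothesis f \<in> CPA3 is implied by the other two and not needed.\<close>
  obtain \<sigma>1 \<sigma>2 g1 g2 g3 where \<sigma>: "\<sigma>1 \<in> {-1, 1}" "\<sigma>2 \<in> {-1, 1}"
    and g: "\<forall>g\<in>{g1, g2, g3}. \<exists>h\<in>{h. \<exists>P\<in>\<P>. affine_component f P h}. \<exists>s\<in>{-1, 1}. g = (\<lambda>x. s * h x)"
    and rep: "\<forall>x. f x = \<sigma>1 * max (g1 x) (\<sigma>2 * max (g2 x) (g3 x))"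
    by (rule maxmin_of_signed_form[OF v_function_maxmin_of_components[OF assms(2,3)]])
  show ?thesis
  proof (intro exI conjI)
    show "\<forall>g\<in>{g1, g2, g3}. \<exists>P\<in>\<P>. \<exists>h s. affine_component f P h \<and> s \<in> {-1, 1::real} \<and> g = (\<lambda>x. s * h x)"
      using g by blast
    show "\<forall>x. f x = \<sigma>1 * max (g1 x) (\<sigma>2 * max (g2 x) (g3 x))" by (rule rep)
  qed (use \<sigma> in auto)
qed

end
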